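(* Let $m\ge 2$, $n_b=m-1$, and let $z=(z^1,\dots,z^m)$ be coordinates on $\mathcal Z$ with $z^1=y^1$, $z^i=(y^i,\hat z^i)$ for $2\le i\le m-1$ ($y^i$ possibly empty), $z^m=\hat z^m$. On $\mathcal Z\times\mathbb R$ (with time coordinate $t$) consider the Pfaffian systems $\Xi^i$, $i=1,\dots,n_b$, spanned by the 1-forms $$\sum_{k=1}^{i} a^{i,j}_{k,\alpha}(z^1,\dots,z^i,\hat z^{i+1})\,\mathrm d z^{k,\alpha}-b^{i,j}(z^1,\dots,z^i,\hat z^{i+1})\,\mathrm dt,\qquad j=1,\dots,\dim(\hat z^{i+1}),$$ (summation over $\alpha$) such that for the corresponding implicit equations $\Xi_e^i:\ \sum_k a^i_k\dot z^k-b^i=0$ the square Jacobian $[\partial_{\hat z^{i+1}}\Xi_e^i]$ is regular. Let $S_{d,k}=\{\Xi^1,\dots,\Xi^{n_b-k}\}$ for $k=0,\dots,n_b$. Then: (a) for $k=0,\dots,n_b-1$, the distribution $\{\partial_{\hat z^{m-k}}\}$ is involutive, is contained in $\mathcal V(S_{d,k})^\perp$, and $\partial_{\hat z^{m-k}}\in\mathcal C(S_{d,k+1})$; (b) for $k=1,\dots,n_b$, each subsystem $\Xi^k$ is parameterizable with respect to the non-derivative variables $\hat z^{k+1}$, i.e. locally $\hat z^{k+1}=g^{k+1}(z^1,\dots,z^k,\dot z^1,\dots,\dot z^k)$; (c) if for some $k$ the block $z^k=(y^k,\hat z^k)$ contains variables $y^k$ (i.e. $n_{z^k}>n_{\hat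 z^k}$), then $\partial_{y^k}\in\mathcal C(S_{d,m-k})$.
   Context: A Pfaffian system $P$ on a manifold is a codistribution spanned by 1-forms. Its annihilator $P^\perp$ is the distribution of vector fields $w$ with $w\rfloor\omega=0$ for all $\omega\in P$. For a Pfaffian system on a bundle $\mathfrak X\times\mathbb R\to\mathbb R$ (time $t$), the vertical annihilator $\mathcal V(P)^\perp$ is the annihilator of the extended system $\{P,\mathrm dt\}$. A Cauchy characteristic vector field $v$ of $P$ satisfies $v\rfloor P=0$ and $v\rfloor\mathrm dP\subset P$; $\mathcal C(P)$ is the distribution of all Cauchy characteristic vector fields (for the empty system it is the whole tangent bundle). A Pfaffian system $P$ spanned by $n_P$ forms $m^i_\alpha(\xi)\mathrm d\xi^\alpha-n^i(\xi)\mathrm dt$ is called parameterizable with respect to $\hat\xi$ if there are coordinates $(\bar\xi,\hat\xi)$, $\xi=\psi(\bar\xi,\hat\xi)$, with $n_{\hat\xi}=n_P$, in which $P$ is spanned by forms $q^i_\alpha(\bar\xi,\hat\xi)\mathrm d\bar\xi^\alpha-r^i(\bar\xi,\hat\xi)\mathrm dt$ (no $\mathrm d\hat\xi$ appears) and the Jacobian of $q^i_\alpha(\bar\xi,\hat\xi)\dot{\bar\xi}^\alpha-r^i(\bar\xi,\hat\xi)$ with respect to $\hat\xi$ is regular; then locally $\hat\xi=g(\bar\xi,\dot{\bar\xi})$. *)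

theory Defs
  imports "HOL-Analysis.Analysis"
begin

text \<open>Coordinates: points of the total space (z,t) are vectors in real^'i, where the finite
 type 'i indexes all coordinates; one designated index is the time coordinate t.\<close>

type_synonym 'i pt = "real ^ 'i"
type_synonym 'i form = "real ^ 'i \<Rightarrow> real ^ 'i"
type_synonym 'i vfield = "real ^ 'i \<Rightarrow> real ^ 'i"

definition pd :: "'i::finite \<Rightarrow> (real ^ 'i \<Rightarrow> real) \<Rightarrow> real ^ 'i \<Rightarrow> real" where
  "pd c f p = deriv (\<lambda>s. f (p + s *\<^sub>R axis c 1)) 0"

fun iter_pd :: "'i::finite list \<Rightarrow> (real ^ 'i \<Rightarrow> real) \<Rightarrow> real ^ 'i \<Rightarrow> real" where
  "iter_pd [] f = f"
| "iter_pd (c # cs) f = pd c (iter_pd cs f)"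

definition smooth_on :: "(real ^ 'i::finite) set \<Rightarrow> (real ^ 'i \<Rightarrow> real) \<Rightarrow> bool" where
  "smooth_on U f \<longleftrightarrow> (\<forall>cs. continuous_on U (iter_pd cs f) \<and>
      (\<forall>c. \<forall>p\<in>U. (\<lambda>s. iter_pd cs f (p + s *\<^sub>R axis c 1)) field_differentiable (at 0)))"

definition smooth_map_on :: "(real ^ 'i::finite) set \<Rightarrow> (real ^ 'i \<Rightarrow> real ^ 'i) \<Rightarrow> bool" where
  "smooth_map_on U F \<longleftrightarrow> (\<forall>c. smooth_on U (\<lambda>p. F p $ c))"

definition sys_at :: "('i::finite form) set \<Rightarrow> real ^ 'i \<Rightarrow> (real ^ 'i) set" where
  "sys_at P p = span ((\<lambda>\<omega>. \<omega> p) ` P)"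

text \<open>Vertical annihilator: annihilator of the extended system {P, dt}.\<close>
definition vert_annih :: "'i::finite \<Rightarrow> ('i form) set \<Rightarrow> real ^ 'i \<Rightarrow> (real ^ 'i) set" where
  "vert_annih tc P p =
     {x. \<forall>\<theta>\<in>span ((\<lambda>\<omega>. \<omega> p) ` P \<union> {axis tc 1}). \<theta> \<bullet> x = 0}"

definition int_d :: "'i::finite vfield \<Rightarrow> 'i form \<Rightarrow> real ^ 'i \<Rightarrow> real ^ 'i" where
  "int_d v \<omega> p = (\<chi> j. \<Sum>i\<in>UNIV. v p $ i * (pd i (\<lambda>q. \<omega> q $ j) p - pd j (\<lambda>q. \<omega> q $ i) p))"

text \<open>Cauchy characteristic vector field of a Pfaffian system on U:
 v \<rfloor> P = 0 and v \<rfloor> dP \<subseteq> P (checked on the generators).\<close>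
definition cauchy_char :: "(real ^ 'i::finite) set \<Rightarrow> ('i form) set \<Rightarrow> 'i vfield \<Rightarrow> bool" where
  "cauchy_char U P v \<longleftrightarrow>
     (\<forall>p\<in>U. \<forall>\<omega>\<in>P. \<omega> p \<bullet> v p = 0 \<and> int_d v \<omega> p \<in> sys_at P p)"

definition lie :: "'i::finite vfield \<Rightarrow> 'i vfield \<Rightarrow> real ^ 'i \<Rightarrow> real ^ 'i" where
  "lie v w p = (\<chi> c. \<Sum>d\<in>UNIV. v p $ d * pd d (\<lambda>q. w q $ c) p - w p $ d * pd d (\<lambda>q. v q $ c) p)"

definition involutive :: "(real ^ 'i::finite) set \<Rightarrow> (real ^ 'i \<Rightarrow> (real ^ 'i) set) \<Rightarrow> bool" where
  "involutive U D \<longleftrightarrow> (\<forall>v w. smooth_map_on U v \<and> smooth_map_on U w \<and>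
       (\<forall>p\<in>U. v p \<in> D p \<and> w p \<in> D p) \<longrightarrow> (\<forall>p\<in>U. lie v w p \<in> D p))"

definition coord_dist :: "'i::finite set \<Rightarrow> real ^ 'i \<Rightarrow> (real ^ 'i) set" where
  "coord_dist C p = span ((\<lambda>c. axis c 1) ` C)"

definition regular_mat :: "'j set \<Rightarrow> 'h set \<Rightarrow> ('j \<Rightarrow> 'h \<Rightarrow> real) \<Rightarrow> bool" where
  "regular_mat J H M \<longleftrightarrow> finite J \<and> finite H \<and> card J = card H \<and>
     (\<forall>x. (\<forall>j\<in>J. (\<Sum>h\<in>H. M j h * x h) = 0) \<longrightarrow> (\<forall>h\<in>H. x h = 0))"

definition pullback :: "(real ^ 'i::finite \<Rightarrow> real ^ 'i) \<Rightarrow> 'i form \<Rightarrow> 'i form" where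
  "pullback \<psi> \<omega> q = (\<chi> c. \<Sum>d\<in>UNIV. \<omega> (\<psi> q) $ d * pd c (\<lambda>q'. \<psi> q' $ d) q)"

text \<open>Parameterizability of the Pfaffian system spanned by the n_P forms \<omega> j, j \<in> J, on U
 (time coordinate tc) with respect to the coordinates H: there is a coordinate change
 \<xi> = \<psi>(\<xi>bar,\<xi>hat) (a diffeomorphism V \<rightarrow> U leaving t and the coordinates \<xi>hat = H unchanged),
 with n_H = n_P, in whose coordinates the system is spanned by forms \<theta> j without d\<xi>hat
 components, such that the Jacobian of \<theta> j \<cdot> (\<xi>bar', 1) w.r.t. \<xi>hat is regular.\<close>
definition parameterizable ::
  "'i::finite \<Rightarrow> (real ^ 'i) set \<Rightarrow> 'j set \<Rightarrow> ('j \<Rightarrow> 'i form) \<Rightarrow> 'i set \<Rightarrow> bool" where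
  "parameterizable tc U J \<omega> H \<longleftrightarrow> finite J \<and> card H = card J \<and> tc \<notin> H \<and>
     (\<exists>V \<psi> \<psi>inv \<theta>. open V \<and> \<psi> ` V = U \<and> inj_on \<psi> V \<and>
        smooth_map_on V \<psi> \<and> smooth_map_on U \<psi>inv \<and> (\<forall>q\<in>V. \<psi>inv (\<psi> q) = q) \<and>
        (\<forall>q\<in>V. \<psi> q $ tc = q $ tc \<and> (\<forall>h\<in>H. \<psi> q $ h = q $ h)) \<and>
        (\<forall>j\<in>J. smooth_map_on V (\<theta> j)) \<and>
        (\<forall>j\<in>J. \<forall>q\<in>V. \<forall>h\<in>H. \<theta> j q $ h = 0) \<and>
        (\<forall>q\<in>V. span ((\<lambda>j. \<theta> j q) ` J) = span ((\<lambda>j. pullback \<psi> (\<omega> j) q) ` J)) \<and>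
        (\<forall>q\<in>V. \<forall>v. v $ tc = 1 \<longrightarrow>
            regular_mat J H (\<lambda>j h. pd h (\<lambda>q'. \<theta> j q' \<bullet> v) q)))"

text \<open>Local solvability of the implicit equations \<omega> j \<cdot> (\<xi>', 1) = 0 for the coordinates H:
 near every solution (p0, v0) there is a continuous g depending only on the coordinates in B
 and their velocities such that the solutions are exactly those with p_H = g(p_B, v_B).\<close>
definition locally_solvable ::
  "'i::finite \<Rightarrow> (real ^ 'i) set \<Rightarrow> 'j set \<Rightarrow> ('j \<Rightarrow> 'i form) \<Rightarrow> 'i set \<Rightarrow> 'i set \<Rightarrow> bool" where
  "locally_solvable tc U J \<omega> H B \<longleftrightarrow>
     (\<forall>p0\<in>U. \<forall>v0. v0 $ tc = 1 \<and> (\<forall>j\<in>J. \<omega> j p0 \<bullet> v0 = 0) \<longrightarrow>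
        (\<exists>N g. open N \<and> (p0, v0) \<in> N \<and> continuous_on N (\<lambda>(p, v). g p v) \<and>
           (\<forall>p v p' v'. (\<forall>c\<in>B. p $ c = p' $ c \<and> v $ c = v' $ c) \<longrightarrow> g p v = g p' v') \<and>
           (\<forall>(p, v)\<in>N. p \<in> U \<and> v $ tc = 1 \<longrightarrow>
              ((\<forall>j\<in>J. \<omega> j p \<bullet> v = 0) \<longleftrightarrow> (\<forall>h\<in>H. p $ h = g p v $ h)))))"

end

theory Submission
  imports Defs
begin

text \<open>Every form of S_{d,k} lives on the first blocks of coordinates: it has no component
  along, and does not depend on, the coordinates of the later blocks. For such a coordinate c
  the field \<partial>_c annihilates the forms and its contraction with their exterior derivatives
  vanishes, so \<partial>_c is Cauchy characteristic; this gives (a) and (c). For (b), the forms of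
  \<Xi>^k have no d zhat^{k+1} components, so the identity coordinates already witness
  parameterizability, and the implicit equations \<Xi>^k_e = 0 are solved for zhat^{k+1} by the
  inverse function theorem applied to (p, v) \<mapsto> (p with zhat^{k+1} replaced by \<Xi>^k_e(p, v), v),
  whose derivative is invertible because the Jacobian of \<Xi>^k_e with respect to zhat^{k+1} is
  regular.\<close>

section \<open>Partial derivatives and smoothness\<close>

lemma pd_eq_0_if_eventually_const:
  assumes "\<forall>\<^sub>F s in nhds (0::real). f (p + s *\<^sub>R axis c 1) = f p"
  shows "pd c f p = 0"
proof -
  have "DERIV (\<lambda>s. f (p + s *\<^sub>R axis c 1)) 0 :> 0 \<longleftrightarrow> DERIV (\<lambda>s. f p) 0 :> 0"
    by (rule DERIV_cong_ev) (use assms in auto)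
  then show ?thesis
    unfolding pd_def by (intro DERIV_imp_deriv) simp
qed

lemma pd_eq_0_if_independent:
  assumes "open U" "p \<in> U"
    and "\<And>q. q \<in> U \<Longrightarrow> (\<forall>d. d \<noteq> c \<longrightarrow> q $ d = p $ d) \<Longrightarrow> f q = f p"
  shows "pd c f p = 0"
proof (rule pd_eq_0_if_eventually_const)
  have "((\<lambda>s::real. p + s *\<^sub>R axis c 1) \<longlongrightarrow> p + 0 *\<^sub>R axis c 1) (nhds 0)"
    by (intro tendsto_intros filterlim_ident)
  then have "\<forall>\<^sub>F s in nhds 0. p + s *\<^sub>R axis c 1 \<in> U"
    using assms(1,2) topological_tendstoD by fastforce
  then show "\<forall>\<^sub>F s in nhds 0. f (p + s *\<^sub>R axis c 1) = f p"
    by eventually_elim (rule assms(3), auto simp: axis_def)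
qed

lemma pd_eq_0_if_vanishing_on:
  "open U \<Longrightarrow> p \<in> U \<Longrightarrow> (\<And>q. q \<in> U \<Longrightarrow> f q = 0) \<Longrightarrow> pd c f p = 0"
  by (rule pd_eq_0_if_independent) auto

lemma pd_coord: "pd c (\<lambda>q. q $ d) p = (if c = d then 1 else 0)"
proof -
  have "DERIV (\<lambda>s. (p + s *\<^sub>R axis c 1) $ d) 0 :> (if c = d then 1 else 0)"
    by (auto simp: axis_def intro!: derivative_eq_intros)
  then show ?thesis
    unfolding pd_def by (rule DERIV_imp_deriv)
qed

lemma pd_const: "pd c (\<lambda>q. k) p = 0"
  by (rule pd_eq_0_if_eventually_const) simp

lemma pd_sum:
  assumes "finite I" "\<And>i. i \<in> I \<Longrightarrow> ((\<lambda>s. f i (p + s *\<^sub>R axis c 1)) has_real_derivative D i) (at 0)"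
  shows "pd c (\<lambda>q. \<Sum>i\<in>I. f i q) p = (\<Sum>i\<in>I. D i)"
  unfolding pd_def by (rule DERIV_imp_deriv) (use assms in \<open>auto intro!: DERIV_sum\<close>)

lemma DERIV_linearization_bound:
  fixes \<phi> :: "real \<Rightarrow> real"
  assumes der: "\<And>t. t \<in> closed_segment 0 b \<Longrightarrow> DERIV \<phi> t :> \<phi>' t"
    and bound: "\<And>t. t \<in> closed_segment 0 b \<Longrightarrow> \<bar>\<phi>' t - K\<bar> \<le> e"
  shows "\<bar>\<phi> b - \<phi> 0 - b * K\<bar> \<le> e * \<bar>b\<bar>"
proof -
  obtain z where z: "z \<in> closed_segment 0 b" "\<phi> b - \<phi> 0 = b * \<phi>' z"
  proof (cases b "0::real" rule: linorder_cases)
    case less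
    then obtain z where "b < z" "z < 0" "\<phi> 0 - \<phi> b = (0 - b) * \<phi>' z"
      using MVT2[of b 0 \<phi> \<phi>'] der by (auto simp: closed_segment_eq_real_ivl)
    then show ?thesis
      by (intro that[of z]) (auto simp: closed_segment_eq_real_ivl algebra_simps)
  next
    case greater
    then obtain z where "0 < z" "z < b" "\<phi> b - \<phi> 0 = (b - 0) * \<phi>' z"
      using MVT2[of 0 b \<phi> \<phi>'] der by (auto simp: closed_segment_eq_real_ivl)
    then show ?thesis
      by (intro that[of z]) (auto simp: closed_segment_eq_real_ivl)
  qed (use that in simp)
  then have "\<bar>\<phi> b - \<phi> 0 - b * K\<bar> = \<bar>b\<bar> * \<bar>\<phi>' z - K\<bar>"
    by (simp add: abs_mult flip: right_diff_distrib)
  also have "\<dots> \<le> \<bar>b\<bar> * e"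
    using bound[OF z(1)] by (intro mult_left_mono) auto
  finally show ?thesis
    by (simp add: mult.commute)
qed

lemma coordinate_step_linearization_bound:
  fixes f :: "real^'i::finite \<Rightarrow> real"
  assumes near: "\<And>y. norm (y - x) < d \<Longrightarrow> y \<in> U \<and> (\<forall>c. \<bar>D c y - D c x\<bar> \<le> e)"
    and der: "\<And>y c. y \<in> U \<Longrightarrow> ((\<lambda>s. f (y + s *\<^sub>R axis c 1)) has_real_derivative D c y) (at 0)"
    and segment: "\<And>t. t \<in> closed_segment 0 b \<Longrightarrow> norm (z + t *\<^sub>R axis c 1 - x) < d"
  shows "\<bar>f (z + b *\<^sub>R axis c 1) - f z - b * D c x\<bar> \<le> e * \<bar>b\<bar>"
proof -
  define \<phi> where "\<phi> s = f (z + s *\<^sub>R axis c 1)" for s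
  have "\<bar>\<phi> b - \<phi> 0 - b * D c x\<bar> \<le> e * \<bar>b\<bar>"
  proof (rule DERIV_linearization_bound[where \<phi>' = "\<lambda>t. D c (z + t *\<^sub>R axis c 1)"])
    fix t assume "t \<in> closed_segment 0 b"
    define y where "y = z + t *\<^sub>R axis c 1"
    have y: "y \<in> U" "\<bar>D c y - D c x\<bar> \<le> e"
      using near segment[OF \<open>t \<in> closed_segment 0 b\<close>] by (auto simp: y_def)
    then show "\<bar>D c (z + t *\<^sub>R axis c 1) - D c x\<bar> \<le> e"
      by (simp add: y_def)
    have "((\<lambda>s. f (y + s *\<^sub>R axis c 1)) has_real_derivative D c y) (at (t + - t))"
      using der[OF y(1)] by simp
    then have "((\<lambda>s. f (y + (s - t) *\<^sub>R axis c 1)) has_real_derivative D c y) (at t)"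
      using DERIV_shift[of "\<lambda>s. f (y + s *\<^sub>R axis c 1)" "D c y" t "- t"] by simp
    moreover have "(\<lambda>s. f (y + (s - t) *\<^sub>R axis c 1)) = \<phi>"
      by (simp add: fun_eq_iff \<phi>_def y_def algebra_simps)
    ultimately show "DERIV \<phi> t :> D c (z + t *\<^sub>R axis c 1)"
      by (simp add: y_def)
  qed
  then show ?thesis
    by (simp add: \<phi>_def)
qed

text \<open>Changing the coordinates in C one at a time, each step costs at most e times its length.\<close>

lemma partials_linearization_bound:
  fixes f :: "real^'i::finite \<Rightarrow> real"
  assumes near: "\<And>y. norm (y - x) < d \<Longrightarrow> y \<in> U \<and> (\<forall>c. \<bar>D c y - D c x\<bar> \<le> e)"
    and der: "\<And>y c. y \<in> U \<Longrightarrow> ((\<lambda>s. f (y + s *\<^sub>R axis c 1)) has_real_derivative D c y) (at 0)"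
    and "e \<ge> 0" and "finite C"
    and "\<And>c. c \<notin> C \<Longrightarrow> a $ c = 0" and "norm a < d"
  shows "\<bar>f (x + a) - f x - (\<Sum>c\<in>UNIV. a $ c * D c x)\<bar> \<le> e * card C * norm a"
  using \<open>finite C\<close> assms(5,6)
proof (induction C arbitrary: a rule: finite_induct)
  case empty
  then have "a = 0"
    by (simp add: vec_eq_iff)
  then show ?case
    by simp
next
  case (insert c C)
  define a' where "a' = a - (a $ c) *\<^sub>R axis c 1"
  have a'_nth: "a' $ i = (if i = c then 0 else a $ i)" for i
    by (simp add: a'_def axis_def)
  have "norm a' \<le> norm a"
    by (rule norm_le_componentwise_cart) (simp add: a'_nth)
  have IH: "\<bar>f (x + a') - f x - (\<Sum>i\<in>UNIV. a' $ i * D i x)\<bar> \<le> e * card C * norm a'"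
    using insert.prems \<open>norm a' \<le> norm a\<close> by (intro insert.IH) (auto simp: a'_nth)
  have "\<bar>f (x + a' + a $ c *\<^sub>R axis c 1) - f (x + a') - a $ c * D c x\<bar> \<le> e * \<bar>a $ c\<bar>"
  proof (rule coordinate_step_linearization_bound[OF near der])
    fix t assume "t \<in> closed_segment 0 (a $ c)"
    then have "norm (x + a' + t *\<^sub>R axis c 1 - x) \<le> norm a"
      by (intro norm_le_componentwise_cart)
        (auto simp: a'_nth axis_def closed_segment_eq_real_ivl split: if_splits)
    then show "norm (x + a' + t *\<^sub>R axis c 1 - x) < d"
      using insert.prems(2) by simp
  qed
  then have step: "\<bar>f (x + a) - f (x + a') - a $ c * D c x\<bar> \<le> e * \<bar>a $ c\<bar>"
    by (simp add: a'_def)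
  have "(\<Sum>i\<in>UNIV. a $ i * D i x) = (\<Sum>i\<in>UNIV. (if i = c then a $ c * D c x else 0) + a' $ i * D i x)"
    by (rule sum.cong) (auto simp: a'_nth)
  then have sum_split: "(\<Sum>i\<in>UNIV. a $ i * D i x) = a $ c * D c x + (\<Sum>i\<in>UNIV. a' $ i * D i x)"
    by (simp add: sum.distrib)
  have "\<bar>f (x + a) - f x - (\<Sum>i\<in>UNIV. a $ i * D i x)\<bar>
      \<le> \<bar>f (x + a) - f (x + a') - a $ c * D c x\<bar> + \<bar>f (x + a') - f x - (\<Sum>i\<in>UNIV. a' $ i * D i x)\<bar>"
    unfolding sum_split by linarith
  also have "\<dots> \<le> e * \<bar>a $ c\<bar> + e * card C * norm a'"
    using step IH by linarith
  also have "\<dots> \<le> e * norm a + e * card C * norm a"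
    using component_le_norm_cart[of a c] \<open>norm a' \<le> norm a\<close> \<open>e \<ge> 0\<close>
    by (intro add_mono mult_left_mono) auto
  also have "\<dots> = e * card (insert c C) * norm a"
    using insert.hyps by (simp add: algebra_simps)
  finally show ?case .
qed

lemma continuous_on_finite_family_near:
  fixes D :: "'c::finite \<Rightarrow> 'a::metric_space \<Rightarrow> real"
  assumes "open U" "x \<in> U" "\<And>c. continuous_on U (D c)" "e > 0"
  obtains d where "d > 0" "\<And>y. dist y x < d \<Longrightarrow> y \<in> U \<and> (\<forall>c. \<bar>D c y - D c x\<bar> \<le> e)"
proof -
  have "\<forall>\<^sub>F y in at x. \<forall>c. dist (D c y) (D c x) < e"
  proof (rule eventually_all_finite)
    fix c
    have "isCont (D c) x"
      using assms continuous_on_eq_continuous_at by blast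
    then show "\<forall>\<^sub>F y in at x. dist (D c y) (D c x) < e"
      using \<open>e > 0\<close> by (simp add: isCont_def tendstoD)
  qed
  moreover have "\<forall>\<^sub>F y in at x. y \<in> U"
    using assms(1,2) by (rule eventually_at_in_open')
  ultimately have "\<forall>\<^sub>F y in at x. y \<in> U \<and> (\<forall>c. dist (D c y) (D c x) < e)"
    by eventually_elim auto
  then obtain d where "d > 0"
    and d: "\<And>y. y \<noteq> x \<Longrightarrow> dist y x < d \<Longrightarrow> y \<in> U \<and> (\<forall>c. dist (D c y) (D c x) < e)"
    unfolding eventually_at by auto
  have "y \<in> U \<and> (\<forall>c. \<bar>D c y - D c x\<bar> \<le> e)" if "dist y x < d" for y
    using d[of y] that assms(2) \<open>e > 0\<close> by (cases "y = x") (auto simp: dist_real_def less_imp_le)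
  with \<open>d > 0\<close> show ?thesis
    by (rule that)
qed

lemma has_derivative_if_continuous_partials:
  fixes f :: "real^'i::finite \<Rightarrow> real"
  assumes "open U" "x \<in> U"
    and der: "\<And>y c. y \<in> U \<Longrightarrow> ((\<lambda>s. f (y + s *\<^sub>R axis c 1)) has_real_derivative D c y) (at 0)"
    and cont: "\<And>c. continuous_on U (D c)"
  shows "(f has_derivative (\<lambda>h. \<Sum>c\<in>UNIV. h $ c * D c x)) (at x)"
  unfolding has_derivative_at_alt
proof (intro conjI allI impI)
  show "bounded_linear (\<lambda>h. \<Sum>c\<in>UNIV. h $ c * D c x)"
    by (intro bounded_linear_intros bounded_linear_vec_nth)
  fix e :: real assume "e > 0"
  define e' where "e' = e / (CARD('i) + 1)"
  have "e' > 0"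
    using \<open>e > 0\<close> by (simp add: e'_def)
  then obtain d where "d > 0" and near: "\<And>y. dist y x < d \<Longrightarrow> y \<in> U \<and> (\<forall>c. \<bar>D c y - D c x\<bar> \<le> e')"
    using continuous_on_finite_family_near[of U x D, OF assms(1,2) cont] by blast
  have "norm (f y - f x - (\<Sum>c\<in>UNIV. (y - x) $ c * D c x)) \<le> e * norm (y - x)"
    if "norm (y - x) < d" for y
  proof -
    have "\<bar>f (x + (y - x)) - f x - (\<Sum>c\<in>UNIV. (y - x) $ c * D c x)\<bar> \<le> e' * CARD('i) * norm (y - x)"
      using that \<open>e' > 0\<close> near
      by (intro partials_linearization_bound[where U = U and d = d] der) (auto simp: dist_norm)
    also have "\<dots> \<le> e * norm (y - x)"
      using \<open>e > 0\<close> by (intro mult_right_mono) (auto simp: e'_def field_simps)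
    finally show ?thesis
      by simp
  qed
  with \<open>d > 0\<close> show "\<exists>d>0. \<forall>y. norm (y - x) < d \<longrightarrow>
      norm (f y - f x - (\<Sum>c\<in>UNIV. (y - x) $ c * D c x)) \<le> e * norm (y - x)"
    by blast
qed

lemma smooth_on_DERIV_pd:
  "smooth_on U f \<Longrightarrow> y \<in> U \<Longrightarrow> ((\<lambda>s. f (y + s *\<^sub>R axis c 1)) has_real_derivative pd c f y) (at 0)"
  unfolding smooth_on_def pd_def
  by (metis DERIV_deriv_iff_field_differentiable iter_pd.simps(1))

lemma smooth_on_imp_continuous_on: "smooth_on U f \<Longrightarrow> continuous_on U f"
  unfolding smooth_on_def by (metis iter_pd.simps(1))

lemma smooth_on_continuous_on_pd: "smooth_on U f \<Longrightarrow> continuous_on U (pd c f)"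
  unfolding smooth_on_def by (metis iter_pd.simps)

lemma smooth_on_has_derivative:
  "open U \<Longrightarrow> x \<in> U \<Longrightarrow> smooth_on U f \<Longrightarrow>
    (f has_derivative (\<lambda>h. \<Sum>c\<in>UNIV. h $ c * pd c f x)) (at x)"
  by (rule has_derivative_if_continuous_partials)
    (auto intro: smooth_on_DERIV_pd smooth_on_continuous_on_pd)

lemma iter_pd_coord_cases:
  "iter_pd cs (\<lambda>p::real^'i::finite. p $ c) = (\<lambda>p. p $ c) \<or> (\<exists>k. iter_pd cs (\<lambda>p::real^'i. p $ c) = (\<lambda>p. k))"
  by (induction cs) (auto simp: pd_coord[abs_def] pd_const[abs_def])

lemma smooth_map_on_id: "smooth_map_on U (\<lambda>q::real^'i::finite. q)"
  unfolding smooth_map_on_def smooth_on_def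
proof (intro allI conjI ballI)
  fix c d :: 'i and cs :: "'i list" and p :: "real^'i"
  have "((\<lambda>s. (p + s *\<^sub>R axis d 1) $ c) has_real_derivative axis d 1 $ c) (at 0)"
    by (auto intro!: derivative_eq_intros)
  then show "(\<lambda>s. iter_pd cs (\<lambda>p. p $ c) (p + s *\<^sub>R axis d 1)) field_differentiable at 0"
    using iter_pd_coord_cases[of cs c] unfolding field_differentiable_def by (auto intro: exI[of _ 0])
  show "continuous_on U (iter_pd cs (\<lambda>p. p $ c))"
    using iter_pd_coord_cases[of cs c] by (auto intro: continuous_intros linear_continuous_on[OF bounded_linear_vec_nth])
qed

section \<open>Coordinate distributions and Cauchy characteristics\<close>

lemma mem_coord_dist_iff:
  fixes x :: "real^'i::finite"
  shows "x \<in> coord_dist C p \<longleftrightarrow> (\<forall>d. d \<notin> C \<longrightarrow> x $ d = 0)"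
proof
  have "span ((\<lambda>c. axis c 1) ` C) \<subseteq> {x::real^'i. \<forall>d. d \<notin> C \<longrightarrow> x $ d = 0}"
    by (rule span_minimal) (auto simp: subspace_def axis_def)
  then show "x \<in> coord_dist C p \<Longrightarrow> \<forall>d. d \<notin> C \<longrightarrow> x $ d = 0"
    by (auto simp: coord_dist_def)
next
  assume "\<forall>d. d \<notin> C \<longrightarrow> x $ d = 0"
  then have "x = (\<Sum>c\<in>C. x $ c *\<^sub>R axis c 1)"
    by (auto simp: vec_eq_iff sum_component axis_def if_distrib cong: if_cong)
  also have "\<dots> \<in> span ((\<lambda>c. axis c 1) ` C)"
    by (intro span_sum span_scale span_base) auto
  finally show "x \<in> coord_dist C p"
    by (simp add: coord_dist_def)
qed

lemma involutive_coord_dist: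
  assumes "open U"
  shows "involutive U (coord_dist C)"
  unfolding involutive_def
proof (intro allI impI ballI)
  fix v w p
  assume vw: "smooth_map_on U v \<and> smooth_map_on U w \<and> (\<forall>p\<in>U. v p \<in> coord_dist C p \<and> w p \<in> coord_dist C p)"
    and "p \<in> U"
  have "pd e (\<lambda>q. v q $ d) p = 0" "pd e (\<lambda>q. w q $ d) p = 0" if "d \<notin> C" for d e
    using vw that by (auto intro!: pd_eq_0_if_vanishing_on[OF assms \<open>p \<in> U\<close>] simp: mem_coord_dist_iff)
  then show "lie v w p \<in> coord_dist C p"
    by (simp add: mem_coord_dist_iff lie_def)
qed

lemma coord_dist_subset_vert_annih:
  assumes P: "\<And>\<omega> d. \<omega> \<in> P \<Longrightarrow> d \<in> C \<Longrightarrow> \<omega> p $ d = 0" and "tc \<notin> C"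
  shows "coord_dist C p \<subseteq> vert_annih tc P p"
proof
  fix x assume "x \<in> coord_dist C p"
  then have x: "\<And>d. d \<notin> C \<Longrightarrow> x $ d = 0"
    by (simp add: mem_coord_dist_iff)
  have "\<theta> \<bullet> x = 0" if "\<theta> \<in> (\<lambda>\<omega>. \<omega> p) ` P \<union> {axis tc 1}" for \<theta>
  proof -
    have "\<theta> $ d * x $ d = 0" for d
      using that P x \<open>tc \<notin> C\<close> by (cases "d \<in> C") (auto simp: axis_def)
    then show ?thesis
      by (auto simp: inner_vec_def intro!: sum.neutral)
  qed
  then have "span ((\<lambda>\<omega>. \<omega> p) ` P \<union> {axis tc 1}) \<subseteq> {\<theta>. \<theta> \<bullet> x = 0}"
    by (intro span_minimal) (auto simp: subspace_def inner_add_left)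
  then show "x \<in> vert_annih tc P p"
    by (auto simp: vert_annih_def)
qed

text \<open>Both terms of the contraction of \<partial>_c with d\<omega> vanish: one differentiates \<omega> along c,
  the other differentiates the vanishing component \<omega>_c.\<close>

lemma cauchy_char_coord_field:
  assumes U: "open U"
    and no_component: "\<And>\<omega> p. \<omega> \<in> P \<Longrightarrow> p \<in> U \<Longrightarrow> \<omega> p $ c = 0"
    and independent: "\<And>\<omega> p q. \<omega> \<in> P \<Longrightarrow> p \<in> U \<Longrightarrow> q \<in> U \<Longrightarrow>
      (\<forall>d. d \<noteq> c \<longrightarrow> p $ d = q $ d) \<Longrightarrow> \<omega> p = \<omega> q"
  shows "cauchy_char U P (\<lambda>p. axis c 1)"
  unfolding cauchy_char_def
proof (intro ballI conjI)
  fix p \<omega> assume p: "p \<in> U" and \<omega>: "\<omega> \<in> P"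
  show "\<omega> p \<bullet> axis c 1 = 0"
    using no_component[OF \<omega> p] by (simp add: inner_axis)
  have "pd c (\<lambda>q. \<omega> q $ j) p = 0" for j
    using independent[OF \<omega> _ p] by (intro pd_eq_0_if_independent[OF U p]) auto
  moreover have "pd j (\<lambda>q. \<omega> q $ c) p = 0" for j
    using no_component[OF \<omega>] by (intro pd_eq_0_if_vanishing_on[OF U p])
  ultimately have "int_d (\<lambda>p. axis c 1) \<omega> p = 0"
    by (simp add: int_d_def vec_eq_iff axis_def flip: of_bool_def)
  then show "int_d (\<lambda>p. axis c 1) \<omega> p \<in> sys_at P p"
    by (simp add: sys_at_def span_zero)
qed

lemma pullback_id: "pullback (\<lambda>q. q) \<omega> = \<omega>"
  by (auto simp: pullback_def pd_coord vec_eq_iff fun_eq_iff if_distrib cong: if_cong)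

lemma parameterizable_id:
  assumes "open U" "tc \<notin> H"
    and "\<And>j. j \<in> H \<Longrightarrow> smooth_map_on U (W j)"
    and "\<And>j q h. j \<in> H \<Longrightarrow> q \<in> U \<Longrightarrow> h \<in> H \<Longrightarrow> W j q $ h = 0"
    and "\<And>q v. q \<in> U \<Longrightarrow> v $ tc = 1 \<Longrightarrow> regular_mat H H (\<lambda>j h. pd h (\<lambda>q'. W j q' \<bullet> v) q)"
  shows "parameterizable tc U H W (H :: 'i::finite set)"
  unfolding parameterizable_def
  using assms smooth_map_on_id[of U]
  by (intro conjI exI[of _ U] exI[of _ "\<lambda>q. q"] exI[of _ W]) (auto simp: pullback_id)

section \<open>Solving a regular block of implicit equations\<close>

definition vec_merge :: "'i set \<Rightarrow> 'a^'i \<Rightarrow> 'a^'i \<Rightarrow> 'a^'i" where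
  "vec_merge A x y = (\<chi> c. if c \<in> A then x $ c else y $ c)"

lemma vec_merge_nth [simp]: "vec_merge A x y $ c = (if c \<in> A then x $ c else y $ c)"
  by (simp add: vec_merge_def)

lemma continuous_on_vec_merge [continuous_intros]:
  fixes f g :: "'a::topological_space \<Rightarrow> real^'i::finite"
  assumes "continuous_on S f" "continuous_on S g"
  shows "continuous_on S (\<lambda>z. vec_merge A (f z) (g z))"
  unfolding vec_merge_def
proof (intro continuous_on_vec_lambda)
  fix c
  show "continuous_on S (\<lambda>z. if c \<in> A then f z $ c else g z $ c)"
    using assms by (cases "c \<in> A") (auto intro: continuous_on_component)
qed

locale regular_constraint_block =
  fixes tc :: "'i::finite" and U :: "(real^'i) set" and H B :: "'i set"
    and W :: "'i \<Rightarrow> real^'i \<Rightarrow> real^'i"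
  assumes open_U: "open U"
    and H_B_disjoint: "H \<inter> B = {}" and tc_notin_H: "tc \<notin> H" and tc_notin_B: "tc \<notin> B"
    and smooth: "\<And>j. j \<in> H \<Longrightarrow> smooth_map_on U (W j)"
    and support: "\<And>j p c. j \<in> H \<Longrightarrow> p \<in> U \<Longrightarrow> c \<notin> B \<Longrightarrow> c \<noteq> tc \<Longrightarrow> W j p $ c = 0"
    and depends: "\<And>j p q. j \<in> H \<Longrightarrow> p \<in> U \<Longrightarrow> q \<in> U \<Longrightarrow>
      (\<forall>c\<in>B \<union> H. p $ c = q $ c) \<Longrightarrow> W j p = W j q"
    and regular: "\<And>p v. p \<in> U \<Longrightarrow> v $ tc = 1 \<Longrightarrow>
      regular_mat H H (\<lambda>j h. pd h (\<lambda>q. W j q \<bullet> v) p)"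
begin

text \<open>A pair (p, v) is a point and a velocity; on velocities with v $ tc = 1 the constraint
  W j p \<bullet> v = 0 is the implicit equation of the j-th form.\<close>

definition constraint :: "'i \<Rightarrow> (real^'i) \<times> (real^'i) \<Rightarrow> real" where
  "constraint j x = W j (fst x) \<bullet> snd x"

definition constraint_deriv :: "'i \<Rightarrow> (real^'i) \<times> (real^'i) \<Rightarrow> (real^'i) \<times> (real^'i) \<Rightarrow> real" where
  "constraint_deriv j x y = (\<Sum>c\<in>UNIV.
     (\<Sum>d\<in>UNIV. fst y $ d * pd d (\<lambda>q. W j q $ c) (fst x)) * snd x $ c + W j (fst x) $ c * snd y $ c)"

text \<open>The inverse function theorem is applied to this map; its local inverse solves the
  constraints for the H-coordinates.\<close>

definition augmented_map :: "(real^'i) \<times> (real^'i) \<Rightarrow> (real^'i) \<times> (real^'i)" where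
  "augmented_map x = (fst x + (\<Sum>h\<in>H. (constraint h x - fst x $ h) *\<^sub>R axis h 1), snd x)"

definition augmented_deriv :: "(real^'i) \<times> (real^'i) \<Rightarrow> (real^'i) \<times> (real^'i) \<Rightarrow> (real^'i) \<times> (real^'i)" where
  "augmented_deriv x y = (fst y + (\<Sum>h\<in>H. (constraint_deriv h x y - fst y $ h) *\<^sub>R axis h 1), snd y)"

lemma augmented_map_components:
  "fst (augmented_map x) $ c = (if c \<in> H then constraint c x else fst x $ c)"
  "snd (augmented_map x) = snd x"
  by (auto simp: augmented_map_def sum_component axis_def if_distrib cong: if_cong)

lemma has_derivative_constraint:
  assumes "j \<in> H" "fst x \<in> U"
  shows "(constraint j has_derivative constraint_deriv j x) (at x)"
proof -
  have "((\<lambda>p. W j p $ c) has_derivative (\<lambda>h. \<Sum>d\<in>UNIV. h $ d * pd d (\<lambda>q. W j q $ c) (fst x))) (at (fst x))" for c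
    using smooth assms open_U by (intro smooth_on_has_derivative) (auto simp: smooth_map_on_def)
  then have "((\<lambda>x. W j (fst x) $ c) has_derivative
      (\<lambda>y. \<Sum>d\<in>UNIV. fst y $ d * pd d (\<lambda>q. W j q $ c) (fst x))) (at x)" for c
    using has_derivative_compose[OF has_derivative_fst[OF has_derivative_ident]] by fastforce
  moreover have "((\<lambda>x. snd x $ c) has_derivative (\<lambda>y. snd y $ c)) (at x)" for c
    by (intro bounded_linear.has_derivative[OF bounded_linear_compose[OF bounded_linear_vec_nth bounded_linear_snd]]
        has_derivative_ident)
  ultimately have "((\<lambda>x. \<Sum>c\<in>UNIV. W j (fst x) $ c * snd x $ c) has_derivative
      (\<lambda>y. \<Sum>c\<in>UNIV. W j (fst x) $ c * snd y $ c
        + (\<Sum>d\<in>UNIV. fst y $ d * pd d (\<lambda>q. W j q $ c) (fst x)) * snd x $ c)) (at x)"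
    by (intro has_derivative_sum has_derivative_mult)
  then show ?thesis
    unfolding constraint_def constraint_deriv_def inner_vec_def inner_real_def
    by (rule has_derivative_eq_rhs) (auto simp: algebra_simps)
qed

lemma has_derivative_augmented_map:
  assumes "fst x \<in> U"
  shows "(augmented_map has_derivative augmented_deriv x) (at x)"
proof -
  have "((\<lambda>x. fst x $ c) has_derivative (\<lambda>y. fst y $ c)) (at x)" for c
    by (intro bounded_linear.has_derivative[OF bounded_linear_compose[OF bounded_linear_vec_nth bounded_linear_fst]]
        has_derivative_ident)
  then show ?thesis
    unfolding augmented_map_def augmented_deriv_def
    by (intro has_derivative_Pair has_derivative_add has_derivative_sum has_derivative_scaleR_left
        has_derivative_diff has_derivative_constraint has_derivative_fst has_derivative_snd
        has_derivative_ident assms) auto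
qed

lemma bounded_linear_augmented_deriv: "fst x \<in> U \<Longrightarrow> bounded_linear (augmented_deriv x)"
  using has_derivative_augmented_map has_derivative_bounded_linear by blast

lemma continuous_on_augmented_deriv:
  "continuous_on (U \<times> UNIV) (\<lambda>x. Blinfun (augmented_deriv x))"
proof (rule continuous_on_blinfun_componentwise)
  fix y :: "(real^'i) \<times> (real^'i)"
  have "continuous_on U (pd d (\<lambda>q. W h q $ c))" "continuous_on U (\<lambda>q. W h q $ c)" if "h \<in> H" for h c d
    using smooth[OF that]
    by (auto simp: smooth_map_on_def intro: smooth_on_continuous_on_pd smooth_on_imp_continuous_on)
  moreover have "continuous_on (U \<times> UNIV) (\<lambda>x. f (fst x))" if "continuous_on U f" for f :: "real^'i \<Rightarrow> real"
    using that by (rule continuous_on_compose2) (auto intro: continuous_intros)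
  ultimately have pd_cont: "continuous_on (U \<times> UNIV) (\<lambda>x. pd d (\<lambda>q. W h q $ c) (fst x))"
      and W_cont: "continuous_on (U \<times> UNIV) (\<lambda>x. W h (fst x) $ c)" if "h \<in> H" for h c d
    using that by blast+
  have snd_cont: "continuous_on (U \<times> (UNIV :: (real^'i) set)) (\<lambda>x. snd x $ c)" for c
    by (intro continuous_intros)
  have "continuous_on (U \<times> UNIV) (\<lambda>x. constraint_deriv h x y)" if "h \<in> H" for h
    unfolding constraint_deriv_def using that
    by (intro continuous_on_sum continuous_on_add continuous_on_mult pd_cont W_cont snd_cont
        continuous_on_const)
  then have "continuous_on (U \<times> UNIV) (\<lambda>x. augmented_deriv x y)"
    unfolding augmented_deriv_def by (intro continuous_intros) auto
  then show "continuous_on (U \<times> UNIV) (\<lambda>x. blinfun_apply (Blinfun (augmented_deriv x)) y)"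
    by (rule continuous_on_eq) (auto simp: bounded_linear_Blinfun_apply bounded_linear_augmented_deriv)
qed

lemma constraint_deriv_position:
  assumes "p0 \<in> U" "j \<in> H"
  shows "constraint_deriv j (p0, v0) (dp, 0) = (\<Sum>d\<in>UNIV. dp $ d * pd d (\<lambda>q. W j q \<bullet> v0) p0)"
proof -
  have pd_inner: "pd d (\<lambda>q. W j q \<bullet> v0) p0 = (\<Sum>c\<in>UNIV. pd d (\<lambda>q. W j q $ c) p0 * v0 $ c)" for d
    unfolding inner_vec_def inner_real_def using smooth assms
    by (intro pd_sum) (auto intro!: DERIV_cmult_right smooth_on_DERIV_pd simp: smooth_map_on_def)
  show ?thesis
    unfolding constraint_deriv_def pd_inner sum_distrib_left sum_distrib_right
    by (subst sum.swap) (simp add: mult.assoc)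
qed

text \<open>Invertibility of the derivative is exactly the regularity of the Jacobian of the
  constraints with respect to the H-coordinates.\<close>

lemma inj_augmented_deriv:
  assumes p0: "p0 \<in> U" and v0: "v0 $ tc = 1"
  shows "inj (augmented_deriv (p0, v0))"
proof -
  have "linear (augmented_deriv (p0, v0))"
    using bounded_linear_augmented_deriv[of "(p0, v0)"] p0 by (simp add: bounded_linear.linear)
  moreover have "y = 0" if y0: "augmented_deriv (p0, v0) y = 0" for y
  proof -
    obtain dp dv where y: "y = (dp, dv)"
      by (cases y)
    have dv: "dv = 0"
      using arg_cong[OF y0, of snd] y by (simp add: augmented_deriv_def)
    have "fst (augmented_deriv (p0, v0) y) $ c = 0" for c
      using y0 by simp
    then have comp: "(if c \<in> H then constraint_deriv c (p0, v0) y else dp $ c) = 0" for c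
      using y by (simp add: augmented_deriv_def sum_component axis_def if_distrib cong: if_cong)
    have off_H: "dp $ c = 0" if "c \<notin> H" for c
      using comp[of c] that by simp
    have "(\<Sum>h\<in>H. pd h (\<lambda>q. W j q \<bullet> v0) p0 * dp $ h) = 0" if j: "j \<in> H" for j
    proof -
      have "0 = constraint_deriv j (p0, v0) y"
        using comp[of j] j by simp
      also have "\<dots> = (\<Sum>d\<in>UNIV. dp $ d * pd d (\<lambda>q. W j q \<bullet> v0) p0)"
        unfolding y dv by (rule constraint_deriv_position[OF p0 j])
      also have "\<dots> = (\<Sum>d\<in>H. dp $ d * pd d (\<lambda>q. W j q \<bullet> v0) p0)"
        using off_H by (intro sum.mono_neutral_right) auto
      finally show ?thesis
        by (simp add: mult.commute)
    qed
    then have "\<forall>h\<in>H. dp $ h = 0"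
      using regular[OF p0 v0] unfolding regular_mat_def by blast
    then have "dp = 0"
      using off_H by (auto simp: vec_eq_iff)
    then show "y = 0"
      using y dv by (simp add: zero_prod_def)
  qed
  ultimately show ?thesis
    by (simp add: linear_injective_0)
qed

lemma augmented_map_local_homeomorphism:
  assumes p0: "p0 \<in> U" and v0: "v0 $ tc = 1"
  obtains U' V \<Psi> where "open U'" "U' \<subseteq> U \<times> UNIV" "(p0, v0) \<in> U'" "open V"
    "homeomorphism U' V augmented_map \<Psi>"
proof -
  let ?x0 = "(p0, v0)"
  have lin: "linear (augmented_deriv ?x0)"
    using bounded_linear_augmented_deriv[of "(p0, v0)"] p0 by (simp add: bounded_linear.linear)
  obtain g where g: "linear g" "g \<circ> augmented_deriv ?x0 = id"
    using linear_injective_left_inverse[OF lin inj_augmented_deriv[OF p0 v0]] by blast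
  have "Blinfun g o\<^sub>L Blinfun (augmented_deriv ?x0) = id_blinfun"
    using g bounded_linear_augmented_deriv[of ?x0] p0
    by (intro blinfun_eqI)
      (auto simp: bounded_linear_Blinfun_apply linear_conv_bounded_linear pointfree_idE)
  then obtain U' V \<Psi> where "open U'" "U' \<subseteq> U \<times> UNIV" "?x0 \<in> U'" "open V"
    "homeomorphism U' V augmented_map \<Psi>"
    using open_U p0 has_derivative_augmented_map bounded_linear_augmented_deriv
      continuous_on_augmented_deriv
    by (auto intro: inverse_function_theorem[of "U \<times> UNIV" augmented_map "\<lambda>x. Blinfun (augmented_deriv x)" ?x0]
        simp: open_Times bounded_linear_Blinfun_apply)
  then show ?thesis
    using that by blast
qed

text \<open>Near a base point (p0, v0), freeze keeps the coordinates the constraints can see and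
  copies the others from the base point; freeze_target is the value augmented_map takes there
  exactly when the constraints hold.\<close>

definition freeze :: "real^'i \<Rightarrow> real^'i \<Rightarrow> (real^'i) \<times> (real^'i) \<Rightarrow> (real^'i) \<times> (real^'i)" where
  "freeze p0 v0 z = (vec_merge (B \<union> H) (fst z) p0, vec_merge B (snd z) v0)"

definition freeze_target :: "real^'i \<Rightarrow> real^'i \<Rightarrow> (real^'i) \<times> (real^'i) \<Rightarrow> (real^'i) \<times> (real^'i)" where
  "freeze_target p0 v0 z = (vec_merge B (fst z) (vec_merge H 0 p0), vec_merge B (snd z) v0)"

lemma freeze_base: "freeze p0 v0 (p0, v0) = (p0, v0)"
  by (simp add: freeze_def vec_eq_iff)

lemma freeze_target_cong:
  "(\<forall>c\<in>B. p $ c = p' $ c \<and> v $ c = v' $ c) \<Longrightarrow> freeze_target p0 v0 (p, v) = freeze_target p0 v0 (p', v')"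
  by (simp add: freeze_target_def vec_eq_iff)

lemma constraint_freeze:
  assumes "j \<in> H" "p \<in> U" "v $ tc = 1" "v0 $ tc = 1" "fst (freeze p0 v0 (p, v)) \<in> U"
  shows "constraint j (freeze p0 v0 (p, v)) = W j p \<bullet> v"
proof -
  let ?x = "freeze p0 v0 (p, v)"
  have "W j (fst ?x) = W j p"
    using assms by (intro depends) (auto simp: freeze_def)
  then have "constraint j ?x = (\<Sum>c\<in>UNIV. W j p $ c * snd ?x $ c)"
    by (simp add: constraint_def inner_vec_def)
  also have "\<dots> = W j p \<bullet> v"
  proof -
    have "W j p $ c * snd ?x $ c = W j p $ c * v $ c" for c
      using support[OF assms(1,2), of c] assms(3,4) tc_notin_B
      by (cases "c \<in> B \<or> c = tc") (auto simp: freeze_def)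
    then show ?thesis
      unfolding inner_vec_def inner_real_def by (rule sum.cong[OF refl])
  qed
  finally show ?thesis .
qed

lemma augmented_map_freeze_iff:
  "augmented_map (freeze p0 v0 z) = freeze_target p0 v0 z \<longleftrightarrow>
    (\<forall>j\<in>H. constraint j (freeze p0 v0 z) = 0)"
  using H_B_disjoint
  by (auto simp: prod_eq_iff vec_eq_iff augmented_map_components freeze_def freeze_target_def)

lemma freeze_eq_iff:
  assumes "augmented_map y = freeze_target p0 v0 z"
  shows "freeze p0 v0 z = y \<longleftrightarrow> (\<forall>h\<in>H. fst z $ h = fst y $ h)"
proof -
  have "fst y $ c = fst (freeze p0 v0 z) $ c" if "c \<notin> H" for c
    using arg_cong[OF assms, of "\<lambda>x. fst x $ c"] that
    by (simp add: augmented_map_components freeze_def freeze_target_def)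
  moreover have "snd y = snd (freeze p0 v0 z)"
    using arg_cong[OF assms, of snd] by (simp add: augmented_map_components freeze_def freeze_target_def)
  ultimately show ?thesis
    by (auto simp: prod_eq_iff vec_eq_iff freeze_def)
qed

lemma parameterizable: "parameterizable tc U H W H"
proof (rule parameterizable_id[OF open_U tc_notin_H smooth _ regular])
  show "W j q $ h = 0" if "j \<in> H" "q \<in> U" "h \<in> H" for j q h
    using support that H_B_disjoint tc_notin_H by blast
qed

lemma constraints_iff_local_inverse:
  assumes "U' \<subseteq> U \<times> UNIV" and hom: "homeomorphism U' V augmented_map \<Psi>" and "v0 $ tc = 1"
    and x: "freeze p0 v0 (p, v) \<in> U'" and t: "freeze_target p0 v0 (p, v) \<in> V"
    and "p \<in> U" "v $ tc = 1"
  shows "(\<forall>j\<in>H. W j p \<bullet> v = 0) \<longleftrightarrow> (\<forall>h\<in>H. p $ h = fst (\<Psi> (freeze_target p0 v0 (p, v))) $ h)"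
proof -
  let ?x = "freeze p0 v0 (p, v)" and ?t = "freeze_target p0 v0 (p, v)"
  have "fst ?x \<in> U"
    using x \<open>U' \<subseteq> U \<times> UNIV\<close> by auto
  then have "(\<forall>j\<in>H. W j p \<bullet> v = 0) \<longleftrightarrow> (\<forall>j\<in>H. constraint j ?x = 0)"
    using constraint_freeze assms(3,6,7) by auto
  also have "\<dots> \<longleftrightarrow> augmented_map ?x = ?t"
    by (rule augmented_map_freeze_iff[symmetric])
  also have "\<dots> \<longleftrightarrow> ?x = \<Psi> ?t"
    using homeomorphism_apply1[OF hom x] homeomorphism_apply2[OF hom t] by metis
  also have "\<dots> \<longleftrightarrow> (\<forall>h\<in>H. p $ h = fst (\<Psi> ?t) $ h)"
    using freeze_eq_iff[OF homeomorphism_apply2[OF hom t]] by simp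
  finally show ?thesis .
qed

lemma locally_solvable: "locally_solvable tc U H W H B"
  unfolding locally_solvable_def
proof (intro ballI allI impI)
  fix p0 v0 assume p0: "p0 \<in> U" and base: "v0 $ tc = 1 \<and> (\<forall>j\<in>H. W j p0 \<bullet> v0 = 0)"
  obtain U' V \<Psi> where "open U'" "U' \<subseteq> U \<times> UNIV" "(p0, v0) \<in> U'" "open V"
    and hom: "homeomorphism U' V augmented_map \<Psi>"
    using augmented_map_local_homeomorphism[OF p0] base by blast
  define N where "N = freeze p0 v0 -` U' \<inter> freeze_target p0 v0 -` V"
  define g where "g p v = fst (\<Psi> (freeze_target p0 v0 (p, v)))" for p v
  have cont_freeze: "continuous_on UNIV (freeze p0 v0)" "continuous_on UNIV (freeze_target p0 v0)"
    unfolding freeze_def freeze_target_def by (auto intro!: continuous_intros)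
  have "open N"
    unfolding N_def using cont_freeze \<open>open U'\<close> \<open>open V\<close>
    by (intro open_Int) (simp_all add: continuous_on_open_vimage[OF open_UNIV])
  have "augmented_map (p0, v0) = freeze_target p0 v0 (p0, v0)"
    using augmented_map_freeze_iff[of p0 v0 "(p0, v0)"] base by (simp add: freeze_base constraint_def)
  then have "(p0, v0) \<in> N"
    using \<open>(p0, v0) \<in> U'\<close> homeomorphism_image1[OF hom] by (force simp: N_def freeze_base)
  moreover have "continuous_on N (\<lambda>(p, v). g p v)"
    unfolding g_def case_prod_beta'
    by (intro continuous_on_fst continuous_on_compose2[OF homeomorphism_cont2[OF hom]])
      (auto simp: N_def intro: continuous_on_subset[OF cont_freeze(2)])
  moreover have "\<forall>p v p' v'. (\<forall>c\<in>B. p $ c = p' $ c \<and> v $ c = v' $ c) \<longrightarrow> g p v = g p' v'"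
    unfolding g_def using freeze_target_cong by metis
  moreover have "\<forall>(p, v)\<in>N. p \<in> U \<and> v $ tc = 1 \<longrightarrow>
      ((\<forall>j\<in>H. W j p \<bullet> v = 0) \<longleftrightarrow> (\<forall>h\<in>H. p $ h = g p v $ h))"
  proof clarify
    fix p v assume "(p, v) \<in> N" "p \<in> U" "v $ tc = 1"
    then show "(\<forall>j\<in>H. W j p \<bullet> v = 0) \<longleftrightarrow> (\<forall>h\<in>H. p $ h = g p v $ h)"
      unfolding g_def using base
      by (intro constraints_iff_local_inverse[OF \<open>U' \<subseteq> U \<times> UNIV\<close> hom]) (auto simp: N_def)
  qed
  ultimately show "\<exists>N g. open N \<and> (p0, v0) \<in> N \<and> continuous_on N (\<lambda>(p, v). g p v) \<and>
      (\<forall>p v p' v'. (\<forall>c\<in>B. p $ c = p' $ c \<and> v $ c = v' $ c) \<longrightarrow> g p v = g p' v') \<and>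
      (\<forall>(p, v)\<in>N. p \<in> U \<and> v $ tc = 1 \<longrightarrow>
         ((\<forall>j\<in>H. W j p \<bullet> v = 0) \<longleftrightarrow> (\<forall>h\<in>H. p $ h = g p v $ h)))"
    using \<open>open N\<close> by blast
qed

end

section \<open>Triangular Pfaffian systems\<close>

locale triangular_pfaffian_system =
  fixes m :: nat and nb :: nat
    and tc :: "'i::finite"
    and Y Zh :: "nat \<Rightarrow> 'i set"
    and U :: "(real ^ 'i) set"
    and w :: "nat \<Rightarrow> 'i \<Rightarrow> real ^ 'i \<Rightarrow> real ^ 'i"
    and S :: "nat \<Rightarrow> (real ^ 'i \<Rightarrow> real ^ 'i) set"
  assumes nb_def: "nb = m - 1"
    and blk_disj: "\<forall>k\<in>{1..m}. Y k \<inter> Zh k = {}"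
    and blk_disj2: "\<forall>k\<in>{1..m}. \<forall>l\<in>{1..m}. k \<noteq> l \<longrightarrow> (Y k \<union> Zh k) \<inter> (Y l \<union> Zh l) = {}"
    and blk_cover: "(\<Union>k\<in>{1..m}. Y k \<union> Zh k) = UNIV - {tc}"
    and U_open: "open U"
    and w_smooth: "\<forall>i\<in>{1..nb}. \<forall>j\<in>Zh (Suc i). smooth_map_on U (w i j)"
    and w_support: "\<forall>i\<in>{1..nb}. \<forall>j\<in>Zh (Suc i). \<forall>p\<in>U. \<forall>c.
        c \<notin> (\<Union>k\<in>{1..i}. Y k \<union> Zh k) \<and> c \<noteq> tc \<longrightarrow> w i j p $ c = 0"
    and w_depends: "\<forall>i\<in>{1..nb}. \<forall>j\<in>Zh (Suc i). \<forall>p\<in>U. \<forall>q\<in>U.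
        (\<forall>c\<in>(\<Union>k\<in>{1..i}. Y k \<union> Zh k) \<union> Zh (Suc i). p $ c = q $ c) \<longrightarrow> w i j p = w i j q"
    and jac_regular: "\<forall>i\<in>{1..nb}. \<forall>p\<in>U. \<forall>v. v $ tc = 1 \<longrightarrow>
        regular_mat (Zh (Suc i)) (Zh (Suc i)) (\<lambda>j h. pd h (\<lambda>q. w i j q \<bullet> v) p)"
    and S_def: "\<forall>k. S k = {w i j | i j. i \<in> {1..nb - k} \<and> j \<in> Zh (Suc i)}"
begin

lemma tc_notin_block: "r \<in> {1..m} \<Longrightarrow> tc \<notin> Y r \<union> Zh r"
  using blk_cover by blast

lemma block_disjoint_lower_blocks:
  assumes "r \<in> {1..m}" "c \<in> Y r \<union> Zh r" "i < r"
  shows "c \<notin> (\<Union>l\<in>{1..i}. Y l \<union> Zh l)"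
proof
  assume "c \<in> (\<Union>l\<in>{1..i}. Y l \<union> Zh l)"
  then obtain l where "l \<in> {1..i}" "c \<in> Y l \<union> Zh l"
    by blast
  moreover have "(Y r \<union> Zh r) \<inter> (Y l \<union> Zh l) = {}"
    using blk_disj2 assms \<open>l \<in> {1..i}\<close> by auto
  ultimately show False
    using assms(2) by blast
qed

lemma S_form_vanishes_on_later_block:
  assumes "\<omega> \<in> S k" "p \<in> U" "r \<in> {1..m}" "c \<in> Y r \<union> Zh r" "nb - k < r"
  shows "\<omega> p $ c = 0"
proof -
  obtain i j where ij: "\<omega> = w i j" "i \<in> {1..nb - k}" "j \<in> Zh (Suc i)"
    using assms(1) S_def by auto
  moreover have "i \<in> {1..nb}" "i < r"
    using ij(2) assms(5) by auto
  moreover have "c \<noteq> tc"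
    using tc_notin_block[OF assms(3)] assms(4) by auto
  ultimately show ?thesis
    using w_support block_disjoint_lower_blocks[OF assms(3,4)] assms(2) by blast
qed

lemma S_form_independent_of_later_coord:
  assumes "\<omega> \<in> S k" "p \<in> U" "q \<in> U" "r \<in> {1..m}" "c \<in> Y r \<union> Zh r" "nb - k < r"
    and "c \<in> Zh r \<Longrightarrow> Suc (nb - k) < r"
    and "\<forall>d. d \<noteq> c \<longrightarrow> p $ d = q $ d"
  shows "\<omega> p = \<omega> q"
proof -
  obtain i j where ij: "\<omega> = w i j" "i \<in> {1..nb - k}" "j \<in> Zh (Suc i)"
    using assms(1) S_def by auto
  have "c \<notin> Zh (Suc i)"
  proof (cases "Suc i < r")
    case True
    then show ?thesis
      using block_disjoint_lower_blocks[OF assms(4,5) True] by auto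
  next
    case False
    then have "Suc i = r" "i = nb - k"
      using assms(6) ij(2) by auto
    then show ?thesis
      using assms(7) by auto
  qed
  moreover have "i \<in> {1..nb}" "i < r"
    using ij(2) assms(6) by auto
  ultimately have "\<forall>d\<in>(\<Union>l\<in>{1..i}. Y l \<union> Zh l) \<union> Zh (Suc i). p $ d = q $ d"
    using block_disjoint_lower_blocks[OF assms(4,5), of i] assms(8) by (metis UnE)
  then have "w i j p = w i j q"
    using w_depends \<open>i \<in> {1..nb}\<close> ij(3) assms(2,3) by blast
  then show ?thesis
    using ij(1) by simp
qed

lemma cauchy_char_later_coord:
  assumes "r \<in> {1..m}" "c \<in> Y r \<union> Zh r" "nb - k < r" "c \<in> Zh r \<Longrightarrow> Suc (nb - k) < r"
  shows "cauchy_char U (S k) (\<lambda>p. axis c 1)"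
  using assms
  by (intro cauchy_char_coord_field U_open S_form_vanishes_on_later_block
      S_form_independent_of_later_coord) auto

lemma coord_dist_subset_vert_annih_S:
  "k < nb \<Longrightarrow> p \<in> U \<Longrightarrow> coord_dist (Zh (m - k)) p \<subseteq> vert_annih tc (S k) p"
  using tc_notin_block[of "m - k"] nb_def
  by (intro coord_dist_subset_vert_annih S_form_vanishes_on_later_block[of _ _ _ "m - k"]) auto

lemma cauchy_char_hat_coord:
  "k < nb \<Longrightarrow> c \<in> Zh (m - k) \<Longrightarrow> cauchy_char U (S (Suc k)) (\<lambda>p. axis c 1)"
  using nb_def by (intro cauchy_char_later_coord[of "m - k"]) auto

lemma cauchy_char_y_coord:
  "k \<in> {1..m} \<Longrightarrow> c \<in> Y k \<Longrightarrow> cauchy_char U (S (m - k)) (\<lambda>p. axis c 1)"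
  using nb_def blk_disj by (intro cauchy_char_later_coord[of k]) auto

lemma regular_constraint_block_at:
  assumes "k \<in> {1..nb}"
  shows "regular_constraint_block tc U (Zh (Suc k)) (\<Union>l\<in>{1..k}. Y l \<union> Zh l) (w k)"
proof
  have "Suc k \<in> {1..m}"
    using assms nb_def by auto
  then show "Zh (Suc k) \<inter> (\<Union>l\<in>{1..k}. Y l \<union> Zh l) = {}" "tc \<notin> Zh (Suc k)"
    using block_disjoint_lower_blocks[of "Suc k"] tc_notin_block by blast+
  show "tc \<notin> (\<Union>l\<in>{1..k}. Y l \<union> Zh l)"
    using tc_notin_block assms nb_def by auto
  show "open U"
    by (fact U_open)
  show "smooth_map_on U (w k j)" if "j \<in> Zh (Suc k)" for j
    using w_smooth assms that by blast
  show "w k j p $ c = 0"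
    if "j \<in> Zh (Suc k)" "p \<in> U" "c \<notin> (\<Union>l\<in>{1..k}. Y l \<union> Zh l)" "c \<noteq> tc" for j p c
    using w_support assms that by blast
  show "w k j p = w k j q"
    if "j \<in> Zh (Suc k)" "p \<in> U" "q \<in> U"
      "\<forall>c\<in>(\<Union>l\<in>{1..k}. Y l \<union> Zh l) \<union> Zh (Suc k). p $ c = q $ c" for j p q
    using w_depends assms that by blast
  show "regular_mat (Zh (Suc k)) (Zh (Suc k)) (\<lambda>j h. pd h (\<lambda>q. w k j q \<bullet> v) p)"
    if "p \<in> U" "v $ tc = 1" for p v
    using jac_regular assms that by blast
qed

lemma parameterizable_block: "k \<in> {1..nb} \<Longrightarrow> parameterizable tc U (Zh (Suc k)) (w k) (Zh (Suc k))"
  using regular_constraint_block_at regular_constraint_block.parameterizable by blast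

lemma locally_solvable_block:
  "k \<in> {1..nb} \<Longrightarrow> locally_solvable tc U (Zh (Suc k)) (w k) (Zh (Suc k)) (\<Union>l\<in>{1..k}. Y l \<union> Zh l)"
  using regular_constraint_block_at regular_constraint_block.locally_solvable by blast

end

theorem proposition10:
  fixes m :: nat and nb :: nat
    and tc :: "'i::finite"
    and Y Zh :: "nat \<Rightarrow> 'i set"
    and U :: "(real ^ 'i) set"
    and w :: "nat \<Rightarrow> 'i \<Rightarrow> real ^ 'i \<Rightarrow> real ^ 'i"
    and S :: "nat \<Rightarrow> (real ^ 'i \<Rightarrow> real ^ 'i) set"
  assumes m2: "m \<ge> 2" and nb_def: "nb = m - 1"
    and blk_disj: "\<forall>k\<in>{1..m}. Y k \<inter> Zh k = {}"
    and blk_disj2: "\<forall>k\<in>{1..m}. \<forall>l\<in>{1..m}. k \<noteq> l \<longrightarrow> (Y k \<union> Zh k) \<inter> (Y l \<union> Zh l) = {}"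
    and blk_cover: "(\<Union>k\<in>{1..m}. Y k \<union> Zh k) = UNIV - {tc}"
    and first_blk: "Zh 1 = {}" and last_blk: "Y m = {}"
    and U_open: "open U"
    and w_smooth: "\<forall>i\<in>{1..nb}. \<forall>j\<in>Zh (Suc i). smooth_map_on U (w i j)"
    and w_support: "\<forall>i\<in>{1..nb}. \<forall>j\<in>Zh (Suc i). \<forall>p\<in>U. \<forall>c.
        c \<notin> (\<Union>k\<in>{1..i}. Y k \<union> Zh k) \<and> c \<noteq> tc \<longrightarrow> w i j p $ c = 0"
    and w_depends: "\<forall>i\<in>{1..nb}. \<forall>j\<in>Zh (Suc i). \<forall>p\<in>U. \<forall>q\<in>U.
        (\<forall>c\<in>(\<Union>k\<in>{1..i}. Y k \<union> Zh k) \<union> Zh (Suc i). p $ c = q $ c) \<longrightarrow> w i j p = w i j q"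
    and jac_regular: "\<forall>i\<in>{1..nb}. \<forall>p\<in>U. \<forall>v. v $ tc = 1 \<longrightarrow>
        regular_mat (Zh (Suc i)) (Zh (Suc i)) (\<lambda>j h. pd h (\<lambda>q. w i j q \<bullet> v) p)"
    and S_def: "\<forall>k. S k = {w i j | i j. i \<in> {1..nb - k} \<and> j \<in> Zh (Suc i)}"
  shows
    "(\<forall>k<nb. involutive U (coord_dist (Zh (m - k)))
          \<and> (\<forall>p\<in>U. coord_dist (Zh (m - k)) p \<subseteq> vert_annih tc (S k) p)
          \<and> (\<forall>c\<in>Zh (m - k). cauchy_char U (S (Suc k)) (\<lambda>p. axis c 1)))
     \<and> (\<forall>k\<in>{1..nb}. parameterizable tc U (Zh (Suc k)) (w k) (Zh (Suc k))
          \<and> locally_solvable tc U (Zh (Suc k)) (w k) (Zh (Suc k)) (\<Union>l\<in>{1..k}. Y l \<union> Zh l))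
     \<and> (\<forall>k\<in>{1..m}. \<forall>c\<in>Y k. cauchy_char U (S (m - k)) (\<lambda>p. axis c 1))"
proof -
  \<comment> \<open>m \<ge> 2, Zh 1 = {} and Y m = {} only fix the block format of the paper.\<close>
  interpret triangular_pfaffian_system m nb tc Y Zh U w S
    by unfold_locales
      (fact nb_def blk_disj blk_disj2 blk_cover U_open w_smooth w_support w_depends jac_regular S_def)+
  show ?thesis
    using involutive_coord_dist[OF U_open] coord_dist_subset_vert_annih_S cauchy_char_hat_coord
      parameterizable_block locally_solvable_block cauchy_char_y_coord
    by blast
qed

end
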